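(* Let $$f(\theta)=\ln2-\mathbb E\Big[\ln\big(1+e^{\theta|\mathsf T|}\big)\Big]+\frac{\theta}{2}\int_{\mathcal R_1}\Big|\ln\frac{q^+(y)}{q^-(y)}\Big|q^+(y)\,\mathrm dy+\frac{\theta}{2}\int_{\mathcal R_2}\Big|\ln\frac{q^+(y)}{q^-(y)}\Big|q^-(y)\,\mathrm dy,\qquad \theta<0.$$ Then $\sup_{\theta<0}f(\theta)=f(-1)=I(\mathsf X;\mathsf Y)$, where $$I(\mathsf X;\mathsf Y)=\ln2-\frac12\int\ln\Big(1+\frac{q^-(y)}{q^+(y)}\Big)q^+(y)\,\mathrm dy-\frac12\int\ln\Big(1+\frac{q^+(y)}{q^-(y)}\Big)q^-(y)\,\mathrm dy.$$
   Context: Let $q^+,q^-$ be positive probability densities on $\mathbb R$ such that the integrals below are finite. Let $\mathsf X$ be uniform on $\{+1,-1\}$ and let $\mathsf Y$ have density $q^{\mathsf X}$ given $\mathsf X$, so $\mathsf Y$ has marginal density $(q^++q^-)/2$. Let $\mathsf T=\ln(q^+(\mathsf Y)/q^-(\mathsf Y))$. Let $\mathcal R_1=\{y:q^+(y)<q^-(y)\}$ and $\mathcal R_2=\{y:q^+(y)>q^-(y)\}$. *)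

theory Defs
  imports "HOL-Analysis.Analysis"
begin

definition llr :: "(real \<Rightarrow> real) \<Rightarrow> (real \<Rightarrow> real) \<Rightarrow> real \<Rightarrow> real" where
  "llr qp qm y = ln (qp y / qm y)"

definition R1 :: "(real \<Rightarrow> real) \<Rightarrow> (real \<Rightarrow> real) \<Rightarrow> real set" where
  "R1 qp qm = {y. qp y < qm y}"

definition R2 :: "(real \<Rightarrow> real) \<Rightarrow> (real \<Rightarrow> real) \<Rightarrow> real set" where
  "R2 qp qm = {y. qp y > qm y}"

text \<open>The function f(theta); the expectation over Y is taken w.r.t. the marginal
  density (q+ + q-)/2.\<close>
definition fobj :: "(real \<Rightarrow> real) \<Rightarrow> (real \<Rightarrow> real) \<Rightarrow> real \<Rightarrow> real" where
  "fobj qp qm \<theta> =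
     ln 2
     - (LINT y|lborel. ln (1 + exp (\<theta> * \<bar>llr qp qm y\<bar>)) * ((qp y + qm y) / 2))
     + \<theta> / 2 * (LINT y:R1 qp qm|lborel. \<bar>llr qp qm y\<bar> * qp y)
     + \<theta> / 2 * (LINT y:R2 qp qm|lborel. \<bar>llr qp qm y\<bar> * qm y)"

definition mutinf :: "(real \<Rightarrow> real) \<Rightarrow> (real \<Rightarrow> real) \<Rightarrow> real" where
  "mutinf qp qm =
     ln 2
     - 1/2 * (LINT y|lborel. ln (1 + qm y / qp y) * qp y)
     - 1/2 * (LINT y|lborel. ln (1 + qp y / qm y) * qm y)"

end

theory Submission
  imports Defs
begin

(* Fix y and write a = q+(y), b = q-(y), M = max a b, m = min a b.  The correction weight
   is q+ on R1 and q- on R2, i.e. always m, so the integrand of f(theta) is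
   (m s - (M + m) ln (1 + e^s)) / 2  with  s = theta ln (M / m).
   By the log-sum inequality this concave function of s is bounded by
   (M ln M + m ln m - (M + m) ln (M + m)) / 2, the integrand of I(X;Y) - ln 2, with equality
   at s = ln (m / M), i.e. theta = -1.  Integrating gives f(theta) <= f(-1) = I(X;Y). *)

lemma diff_le_mult_ln_div:
  fixes x p :: real
  assumes "x > 0" "p > 0"
  shows "x - p \<le> x * ln (x / p)"
proof -
  have "ln (p / x) \<le> p / x - 1"
    using assms by (intro ln_le_minus_one) simp
  then have "x * (1 - p / x) \<le> x * ln (x / p)"
    using assms by (intro mult_left_mono) (simp_all add: ln_div)
  then show ?thesis
    using assms by (simp add: algebra_simps)
qed

lemma log_sum_inequality:
  fixes x p :: "'i \<Rightarrow> real"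
  assumes "finite I" "I \<noteq> {}" "\<And>i. i \<in> I \<Longrightarrow> x i > 0" "\<And>i. i \<in> I \<Longrightarrow> p i > 0"
  shows "(\<Sum>i\<in>I. x i) * ln ((\<Sum>i\<in>I. x i) / (\<Sum>i\<in>I. p i)) \<le> (\<Sum>i\<in>I. x i * ln (x i / p i))"
proof -
  define X P where "X = (\<Sum>i\<in>I. x i)" and "P = (\<Sum>i\<in>I. p i)"
  have "X > 0" "P > 0"
    unfolding X_def P_def using assms by (simp_all add: sum_pos)
  define c where "c = X / P"
  have "c > 0"
    unfolding c_def using \<open>X > 0\<close> \<open>P > 0\<close> by simp
  have split_ln: "x i * ln (x i / p i) = x i * ln c + x i * ln (x i / (c * p i))" if "i \<in> I" for i
  proof -
    have "ln (x i / p i) = ln c + ln (x i / (c * p i))"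
      using assms(3,4)[OF that] \<open>c > 0\<close> by (simp add: ln_div ln_mult)
    then show ?thesis
      by (simp add: distrib_left)
  qed
  have "0 = X - c * P"
    unfolding c_def using \<open>P > 0\<close> by simp
  also have "\<dots> = (\<Sum>i\<in>I. x i - c * p i)"
    unfolding X_def P_def by (simp add: sum_subtractf sum_distrib_left)
  also have "\<dots> \<le> (\<Sum>i\<in>I. x i * ln (x i / (c * p i)))"
    using assms \<open>c > 0\<close> by (intro sum_mono diff_le_mult_ln_div) simp_all
  finally have "0 \<le> (\<Sum>i\<in>I. x i * ln (x i / (c * p i)))" .
  then have "X * ln c \<le> X * ln c + (\<Sum>i\<in>I. x i * ln (x i / (c * p i)))"
    by simp
  also have "\<dots> = (\<Sum>i\<in>I. x i * ln c + x i * ln (x i / (c * p i)))"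
    unfolding X_def by (simp add: sum.distrib sum_distrib_right)
  also have "\<dots> = (\<Sum>i\<in>I. x i * ln (x i / p i))"
    by (intro sum.cong) (simp_all add: split_ln)
  finally show ?thesis
    unfolding X_def P_def c_def .
qed

lemma softplus_conjugate_le:
  fixes x y s :: real
  assumes "x > 0" "y > 0"
  shows "y * s - (x + y) * ln (1 + exp s) \<le> x * ln x + y * ln y - (x + y) * ln (x + y)"
proof -
  have "0 < 1 + exp s"
    using exp_gt_zero[of s] by linarith
  have "(x + y) * ln ((x + y) / (1 + exp s)) \<le> x * ln (x / 1) + y * ln (y / exp s)"
    using log_sum_inequality[of "{True, False}" "\<lambda>i. if i then x else y" "\<lambda>i. if i then 1 else exp s"]
      assms by simp
  also have "\<dots> = x * ln x + y * ln y - y * s"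
    using assms by (simp add: ln_divide_pos algebra_simps)
  finally show ?thesis
    using assms \<open>0 < 1 + exp s\<close> by (simp add: ln_divide_pos algebra_simps)
qed

lemma softplus_conjugate_attained:
  fixes x y :: real
  assumes "x > 0" "y > 0"
  shows "y * ln (y / x) - (x + y) * ln (1 + exp (ln (y / x))) = x * ln x + y * ln y - (x + y) * ln (x + y)"
proof -
  have "1 + exp (ln (y / x)) = (x + y) / x"
    using assms by (simp add: field_simps)
  then show ?thesis
    using assms by (simp add: ln_div algebra_simps)
qed

definition fobj_density :: "real \<Rightarrow> real \<Rightarrow> real \<Rightarrow> real" where
  "fobj_density \<theta> a b =
     \<theta> / 2 * (\<bar>ln (a / b)\<bar> * min a b) - (a + b) / 2 * ln (1 + exp (\<theta> * \<bar>ln (a / b)\<bar>))"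

definition mutinf_density :: "real \<Rightarrow> real \<Rightarrow> real" where
  "mutinf_density a b = (a * ln a + b * ln b - (a + b) * ln (a + b)) / 2"

lemma abs_ln_div_eq_ln_max_div_min:
  fixes a b :: real
  assumes "a > 0" "b > 0"
  shows "\<bar>ln (a / b)\<bar> = ln (max a b / min a b)"
  using assms by (simp add: ln_divide_pos max_def min_def)

lemma fobj_density_max_min:
  assumes "a > 0" "b > 0"
  shows "fobj_density \<theta> a b =
    (min a b * (\<theta> * ln (max a b / min a b))
      - (max a b + min a b) * ln (1 + exp (\<theta> * ln (max a b / min a b)))) / 2"
proof -
  have "a + b = max a b + min a b"
    by linarith
  then show ?thesis
    unfolding fobj_density_def abs_ln_div_eq_ln_max_div_min[OF assms] by (simp add: algebra_simps)
qed

lemma mutinf_density_max_min: "mutinf_density a b = mutinf_density (max a b) (min a b)"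
  by (cases "a \<le> b") (simp_all add: mutinf_density_def algebra_simps)

lemma fobj_density_le_mutinf_density:
  assumes "a > 0" "b > 0"
  shows "fobj_density \<theta> a b \<le> mutinf_density a b"
proof -
  have "max a b > 0" "min a b > 0"
    using assms by simp_all
  from softplus_conjugate_le[OF this, of "\<theta> * ln (max a b / min a b)"]
  have "fobj_density \<theta> a b \<le> mutinf_density (max a b) (min a b)"
    unfolding fobj_density_max_min[OF assms] mutinf_density_def by simp
  then show ?thesis
    using mutinf_density_max_min[of a b] by simp
qed

lemma fobj_density_minus_one:
  assumes "a > 0" "b > 0"
  shows "fobj_density (-1) a b = mutinf_density a b"
proof -
  have pos: "max a b > 0" "min a b > 0"
    using assms by simp_all
  then have s: "-1 * ln (max a b / min a b) = ln (min a b / max a b)"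
    by (simp add: ln_divide_pos)
  have "fobj_density (-1) a b =
    (min a b * ln (min a b / max a b)
      - (max a b + min a b) * ln (1 + exp (ln (min a b / max a b)))) / 2"
    unfolding fobj_density_max_min[OF assms] s by (rule refl)
  also have "\<dots> = mutinf_density (max a b) (min a b)"
    unfolding softplus_conjugate_attained[OF pos] mutinf_density_def by (rule refl)
  also have "\<dots> = mutinf_density a b"
    by (rule mutinf_density_max_min[symmetric])
  finally show ?thesis .
qed

lemma mutinf_density_eq:
  assumes "a > 0" "b > 0"
  shows "mutinf_density a b = - 1/2 * (ln (1 + b / a) * a) - 1/2 * (ln (1 + a / b) * b)"
proof -
  have ln_one_plus: "ln (1 + b / a) = ln (a + b) - ln a" "ln (1 + a / b) = ln (a + b) - ln b"
    using assms by (simp_all add: field_simps ln_divide_pos)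
  show ?thesis
    unfolding mutinf_density_def ln_one_plus by (simp add: field_simps)
qed

lemma has_bochner_integral_mutinf_density:
  fixes qp qm :: "real \<Rightarrow> real"
  assumes "\<And>y. qp y > 0" "\<And>y. qm y > 0"
    and "integrable lborel (\<lambda>y. ln (1 + qm y / qp y) * qp y)"
    and "integrable lborel (\<lambda>y. ln (1 + qp y / qm y) * qm y)"
  shows "has_bochner_integral lborel (\<lambda>y. mutinf_density (qp y) (qm y)) (mutinf qp qm - ln 2)"
proof -
  have "has_bochner_integral lborel
    (\<lambda>y. - 1/2 * (ln (1 + qm y / qp y) * qp y) - 1/2 * (ln (1 + qp y / qm y) * qm y))
    (- 1/2 * (LINT y|lborel. ln (1 + qm y / qp y) * qp y)
      - 1/2 * (LINT y|lborel. ln (1 + qp y / qm y) * qm y))"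
    by (intro has_bochner_integral_diff has_bochner_integral_mult_right
        has_bochner_integral_integrable assms(3,4))
  then show ?thesis
    unfolding mutinf_def using assms(1,2) by (simp add: mutinf_density_eq)
qed

lemma has_bochner_integral_fobj_density:
  fixes qp qm :: "real \<Rightarrow> real"
  assumes "\<And>y. qp y > 0"
    and "set_integrable lborel (R1 qp qm) (\<lambda>y. \<bar>llr qp qm y\<bar> * qp y)"
    and "set_integrable lborel (R2 qp qm) (\<lambda>y. \<bar>llr qp qm y\<bar> * qm y)"
    and "integrable lborel (\<lambda>y. ln (1 + exp (\<theta> * \<bar>llr qp qm y\<bar>)) * ((qp y + qm y) / 2))"
  shows "has_bochner_integral lborel (\<lambda>y. fobj_density \<theta> (qp y) (qm y)) (fobj qp qm \<theta> - ln 2)"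
proof -
  let ?l = "\<lambda>y. \<bar>llr qp qm y\<bar>"
  have "fobj_density \<theta> (qp y) (qm y) =
      \<theta> / 2 * (indicator (R1 qp qm) y * (?l y * qp y))
      + \<theta> / 2 * (indicator (R2 qp qm) y * (?l y * qm y))
      - ln (1 + exp (\<theta> * ?l y)) * ((qp y + qm y) / 2)" for y
    using assms(1)[of y]
    by (cases "qp y" "qm y" rule: linorder_cases)
      (simp_all add: fobj_density_def llr_def R1_def R2_def algebra_simps)
  moreover have "has_bochner_integral lborel
    (\<lambda>y. \<theta> / 2 * (indicator (R1 qp qm) y * (?l y * qp y))
      + \<theta> / 2 * (indicator (R2 qp qm) y * (?l y * qm y))
      - ln (1 + exp (\<theta> * ?l y)) * ((qp y + qm y) / 2))
    (\<theta> / 2 * (LINT y:R1 qp qm|lborel. ?l y * qp y)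
      + \<theta> / 2 * (LINT y:R2 qp qm|lborel. ?l y * qm y)
      - (LINT y|lborel. ln (1 + exp (\<theta> * ?l y)) * ((qp y + qm y) / 2)))"
    using assms(2-4) unfolding set_integrable_def set_lebesgue_integral_def
    by (intro has_bochner_integral_diff has_bochner_integral_add has_bochner_integral_mult_right
        has_bochner_integral_integrable) (simp_all add: has_bochner_integral_iff)
  ultimately show ?thesis
    unfolding fobj_def by simp
qed

theorem mainTheorem2:
  fixes qp qm :: "real \<Rightarrow> real"
  assumes meas_p: "qp \<in> borel_measurable borel"
    and meas_m: "qm \<in> borel_measurable borel"
    and pos_p: "\<And>y. qp y > 0"
    and pos_m: "\<And>y. qm y > 0"
    and int_p: "integrable lborel qp" and one_p: "(LINT y|lborel. qp y) = 1"
    and int_m: "integrable lborel qm" and one_m: "(LINT y|lborel. qm y) = 1"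
    and fin1: "set_integrable lborel (R1 qp qm) (\<lambda>y. \<bar>llr qp qm y\<bar> * qp y)"
    and fin2: "set_integrable lborel (R2 qp qm) (\<lambda>y. \<bar>llr qp qm y\<bar> * qm y)"
    and fin3: "\<And>\<theta>. \<theta> < 0 \<Longrightarrow>
               integrable lborel (\<lambda>y. ln (1 + exp (\<theta> * \<bar>llr qp qm y\<bar>)) * ((qp y + qm y) / 2))"
    and fin4: "integrable lborel (\<lambda>y. ln (1 + qm y / qp y) * qp y)"
    and fin5: "integrable lborel (\<lambda>y. ln (1 + qp y / qm y) * qm y)"
  shows "(SUP \<theta>\<in>{..<(0::real)}. fobj qp qm \<theta>) = fobj qp qm (-1)
         \<and> fobj qp qm (-1) = mutinf qp qm"
proof -
  have fobj_integral: "has_bochner_integral lborel (\<lambda>y. fobj_density \<theta> (qp y) (qm y)) (fobj qp qm \<theta> - ln 2)"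
    if "\<theta> < 0" for \<theta>
    using has_bochner_integral_fobj_density[OF pos_p fin1 fin2 fin3[OF that]] .
  have mutinf_integral: "has_bochner_integral lborel (\<lambda>y. mutinf_density (qp y) (qm y)) (mutinf qp qm - ln 2)"
    using has_bochner_integral_mutinf_density[OF pos_p pos_m fin4 fin5] .
  have attained: "fobj qp qm (-1) = mutinf qp qm"
    using fobj_integral[of "-1"] mutinf_integral by (simp add: fobj_density_minus_one pos_p pos_m has_bochner_integral_iff)
  have "fobj qp qm \<theta> \<le> fobj qp qm (-1)" if "\<theta> < 0" for \<theta>
  proof -
    have "fobj qp qm \<theta> - ln 2 = (LINT y|lborel. fobj_density \<theta> (qp y) (qm y))"
      using fobj_integral[OF that] by (simp add: has_bochner_integral_iff)
    also have "\<dots> \<le> (LINT y|lborel. mutinf_density (qp y) (qm y))"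
      using fobj_integral[OF that] mutinf_integral
      by (intro integral_mono fobj_density_le_mutinf_density pos_p pos_m)
        (simp_all add: has_bochner_integral_iff)
    also have "\<dots> = mutinf qp qm - ln 2"
      using mutinf_integral by (simp add: has_bochner_integral_iff)
    finally show ?thesis
      using attained by simp
  qed
  then have "(SUP \<theta>\<in>{..<(0::real)}. fobj qp qm \<theta>) = fobj qp qm (-1)"
    by (intro cSup_eq_maximum) auto
  with attained show ?thesis
    by simp
qed

end
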